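(* Let $m\in\mathbb{Z}_{>0}\cup\{\infty\}$, $n\ge1$, let $\tilde W$ be the subalgebra of $H(m,1,n)$ generated by $\tau,\tau^{-1},\sigma_1,\dots,\sigma_{n-2}$, and let $\epsilon=\pm1$. For $j\in\{0,\dots,n-1\}$, $\alpha\in\mathfrak{E}_m$ and $w\in\tilde W$, the element $\sigma_j^{\epsilon}\sigma_{j-1}^{\epsilon}\cdots\sigma_1^{\epsilon}\tau^{\alpha}\sigma_1\sigma_2\cdots\sigma_{n-1}w$ equals $\sigma_j^{-\epsilon}\sigma_{j-1}^{-\epsilon}\cdots\sigma_1^{-\epsilon}\tau^{\alpha}\sigma_1\sigma_2\cdots\sigma_{n-1}w$ plus an $\mathcal{A}_m$-linear combination of elements $\sigma_k^{-\epsilon}\sigma_{k-1}^{-\epsilon}\cdots\sigma_1^{-\epsilon}\tau^{\alpha}\sigma_1\sigma_2\cdots\sigma_{n-1}w_k$ with $k<j$ and $w_k\in\tilde W$.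
   Context: $\mathcal{A}_m:=\mathbb{C}[q^{\pm1},v_1^{\pm1},\dots,v_m^{\pm1}]$ for finite $m$, $\mathcal{A}_\infty:=\mathbb{C}[q,q^{-1}]$; $\mathfrak{E}_m:=\{0,\dots,m-1\}$ for finite $m$, $\mathfrak{E}_\infty:=\mathbb{Z}$. $H(m,1,n)$ is the $\mathcal{A}_m$-algebra generated by $\tau,\tau^{-1},\sigma_1,\dots,\sigma_{n-1}$ subject to $\tau\tau^{-1}=\tau^{-1}\tau=1$, $\sigma_i\sigma_{i+1}\sigma_i=\sigma_{i+1}\sigma_i\sigma_{i+1}$, $\sigma_i\sigma_j=\sigma_j\sigma_i$ ($|i-j|>1$), $\tau\sigma_1\tau\sigma_1=\sigma_1\tau\sigma_1\tau$, $\tau\sigma_i=\sigma_i\tau$ ($i>1$), $\sigma_i^2=(q-q^{-1})\sigma_i+1$, and $(\tau-v_1)\cdots(\tau-v_m)=0$ if $m<\infty$. Empty products equal $1$. *)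

theory Defs
  imports Complex_Main "HOL-Library.Extended_Nat"
begin

text \<open>The Hecke algebra H(m,1,n) is the universal A_m-algebra on generators
tau, tau^-1, sigma_1..sigma_(n-1) subject to the defining relations.  A statement
of the form "X = Y + (A_m-linear combination of elements of a given shape)" holds
in H(m,1,n) iff it holds for every A_m-algebra R and every family of elements of R
satisfying the defining relations.  An A_m-algebra structure on a ring R is a ring
map A_m -> centre(R), i.e. a C-algebra structure cs together with invertible central
elements q (inverse qi) and v_i (inverse vi_i), 1 <= i <= m.\<close>

definition vidx :: "enat \<Rightarrow> nat \<Rightarrow> bool" where
  "vidx m i = (case m of enat k \<Rightarrow> 1 \<le> i \<and> i \<le> k | \<infinity> \<Rightarrow> False)"

definition Eset :: "enat \<Rightarrow> int set" where
  "Eset m = (case m of enat k \<Rightarrow> {0..int k - 1} | \<infinity> \<Rightarrow> UNIV)"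

definition tpow :: "'a::ring_1 \<Rightarrow> 'a \<Rightarrow> int \<Rightarrow> 'a" where
  "tpow t ti a = (if 0 \<le> a then t ^ nat a else ti ^ nat (- a))"

definition desc_prod :: "(nat \<Rightarrow> 'a::monoid_mult) \<Rightarrow> nat \<Rightarrow> 'a" where
  "desc_prod f j = prod_list (map f (rev [1..<Suc j]))"

definition asc_prod :: "(nat \<Rightarrow> 'a::monoid_mult) \<Rightarrow> nat \<Rightarrow> 'a" where
  "asc_prod f k = prod_list (map f [1..<k])"

definition hecke_rels ::
  "enat \<Rightarrow> nat \<Rightarrow> (complex \<Rightarrow> 'a::ring_1) \<Rightarrow> 'a \<Rightarrow> 'a \<Rightarrow> (nat \<Rightarrow> 'a) \<Rightarrow> (nat \<Rightarrow> 'a)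
     \<Rightarrow> 'a \<Rightarrow> 'a \<Rightarrow> (nat \<Rightarrow> 'a) \<Rightarrow> (nat \<Rightarrow> 'a) \<Rightarrow> bool" where
  "hecke_rels m n cs q qi v vi tau taui sigma sigmai \<longleftrightarrow>
     \<comment> \<open>A_m-algebra structure: ring map into the centre\<close>
     cs 1 = 1 \<and> (\<forall>a b. cs (a + b) = cs a + cs b) \<and> (\<forall>a b. cs (a * b) = cs a * cs b) \<and>
     (\<forall>c x. cs c * x = x * cs c) \<and>
     (\<forall>x. q * x = x * q) \<and> (\<forall>x. qi * x = x * qi) \<and> q * qi = 1 \<and> qi * q = 1 \<and>
     (\<forall>i. vidx m i \<longrightarrow> (\<forall>x. v i * x = x * v i) \<and> (\<forall>x. vi i * x = x * vi i)
            \<and> v i * vi i = 1 \<and> vi i * v i = 1) \<and>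
     \<comment> \<open>inverses\<close>
     tau * taui = 1 \<and> taui * tau = 1 \<and>
     (\<forall>i. 1 \<le> i \<and> i < n \<longrightarrow> sigma i * sigmai i = 1 \<and> sigmai i * sigma i = 1) \<and>
     \<comment> \<open>braid relations\<close>
     (\<forall>i. 1 \<le> i \<and> i + 1 < n \<longrightarrow>
          sigma i * sigma (i+1) * sigma i = sigma (i+1) * sigma i * sigma (i+1)) \<and>
     (\<forall>i j. 1 \<le> i \<and> i < n \<and> 1 \<le> j \<and> j < n \<and> (i + 1 < j \<or> j + 1 < i) \<longrightarrow>
          sigma i * sigma j = sigma j * sigma i) \<and>
     (1 < n \<longrightarrow> tau * sigma 1 * tau * sigma 1 = sigma 1 * tau * sigma 1 * tau) \<and>
     (\<forall>i. 1 < i \<and> i < n \<longrightarrow> tau * sigma i = sigma i * tau) \<and>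
     \<comment> \<open>quadratic relations\<close>
     (\<forall>i. 1 \<le> i \<and> i < n \<longrightarrow> sigma i * sigma i = (q - qi) * sigma i + 1) \<and>
     \<comment> \<open>cyclotomic relation\<close>
     (\<forall>k. m = enat k \<longrightarrow> prod_list (map (\<lambda>i. tau - v i) [1..<Suc k]) = 0)"

text \<open>The image of A_m in R: subring generated by cs(C), q^(+-1), v_i^(+-1).\<close>
inductive_set scalars ::
  "enat \<Rightarrow> (complex \<Rightarrow> 'a::ring_1) \<Rightarrow> 'a \<Rightarrow> 'a \<Rightarrow> (nat \<Rightarrow> 'a) \<Rightarrow> (nat \<Rightarrow> 'a) \<Rightarrow> 'a set"
  for m cs q qi v vi where
    sc_c: "cs c \<in> scalars m cs q qi v vi"
  | sc_q: "q \<in> scalars m cs q qi v vi"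
  | sc_qi: "qi \<in> scalars m cs q qi v vi"
  | sc_v: "vidx m i \<Longrightarrow> v i \<in> scalars m cs q qi v vi"
  | sc_vi: "vidx m i \<Longrightarrow> vi i \<in> scalars m cs q qi v vi"
  | sc_add: "a \<in> scalars m cs q qi v vi \<Longrightarrow> b \<in> scalars m cs q qi v vi \<Longrightarrow> a + b \<in> scalars m cs q qi v vi"
  | sc_mult: "a \<in> scalars m cs q qi v vi \<Longrightarrow> b \<in> scalars m cs q qi v vi \<Longrightarrow> a * b \<in> scalars m cs q qi v vi"

inductive_set Wtilde ::
  "enat \<Rightarrow> nat \<Rightarrow> (complex \<Rightarrow> 'a::ring_1) \<Rightarrow> 'a \<Rightarrow> 'a \<Rightarrow> (nat \<Rightarrow> 'a) \<Rightarrow> (nat \<Rightarrow> 'a)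
     \<Rightarrow> 'a \<Rightarrow> 'a \<Rightarrow> (nat \<Rightarrow> 'a) \<Rightarrow> 'a set"
  for m n cs q qi v vi tau taui sigma where
    W_sc: "a \<in> scalars m cs q qi v vi \<Longrightarrow> a \<in> Wtilde m n cs q qi v vi tau taui sigma"
  | W_tau: "tau \<in> Wtilde m n cs q qi v vi tau taui sigma"
  | W_taui: "taui \<in> Wtilde m n cs q qi v vi tau taui sigma"
  | W_sigma: "1 \<le> i \<Longrightarrow> i + 2 \<le> n \<Longrightarrow> sigma i \<in> Wtilde m n cs q qi v vi tau taui sigma"
  | W_add: "a \<in> Wtilde m n cs q qi v vi tau taui sigma \<Longrightarrow> b \<in> Wtilde m n cs q qi v vi tau taui sigma
              \<Longrightarrow> a + b \<in> Wtilde m n cs q qi v vi tau taui sigma"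
  | W_mult: "a \<in> Wtilde m n cs q qi v vi tau taui sigma \<Longrightarrow> b \<in> Wtilde m n cs q qi v vi tau taui sigma
              \<Longrightarrow> a * b \<in> Wtilde m n cs q qi v vi tau taui sigma"

definition spow :: "(nat \<Rightarrow> 'a) \<Rightarrow> (nat \<Rightarrow> 'a) \<Rightarrow> int \<Rightarrow> nat \<Rightarrow> 'a" where
  "spow sigma sigmai e i = (if e = 1 then sigma i else sigmai i)"

end

theory Submission
  imports Defs
begin

text \<open>The quadratic relation gives \<open>\<sigma>\<^sub>i\<^sup>-\<^sup>1 = \<sigma>\<^sub>i - (q - q\<^sup>-\<^sup>1)\<close>, so
  \<open>\<sigma>\<^sub>j\<^sup>\<epsilon> = \<sigma>\<^sub>j\<^sup>-\<^sup>\<epsilon> + c\<close> with a central scalar \<open>c\<close>. Induction on \<open>j\<close> then leaves, besides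
  \<open>c\<close> times the monomial of length \<open>j - 1\<close>, the factor \<open>\<sigma>\<^sub>j\<^sup>\<epsilon>\<close> applied to a combination of
  monomials of length \<open>k \<le> j - 2\<close>. There \<open>\<sigma>\<^sub>j\<^sup>\<epsilon>\<close> commutes with \<open>\<sigma>\<^sub>k\<^sup>-\<^sup>\<epsilon>\<cdots>\<sigma>\<^sub>1\<^sup>-\<^sup>\<epsilon>\<close>
  and with \<open>\<tau>\<^sup>\<alpha>\<close>, and the braid relations give
  \<open>\<sigma>\<^sub>j \<sigma>\<^sub>1\<cdots>\<sigma>\<^sub>n\<^sub>-\<^sub>1 = \<sigma>\<^sub>1\<cdots>\<sigma>\<^sub>n\<^sub>-\<^sub>1 \<sigma>\<^sub>j\<^sub>-\<^sub>1\<close>; since \<open>j - 1 \<le> n - 2\<close>, the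
  factor is absorbed into the \<open>W\<close>-part on the right.\<close>

lemma commute_prod_list:
  fixes x :: "'a::monoid_mult"
  assumes "\<And>y. y \<in> set ys \<Longrightarrow> x * y = y * x"
  shows "x * prod_list ys = prod_list ys * x"
  using assms by (induction ys) (simp_all, metis mult.assoc)

lemma commute_with_inverse:
  fixes x y z :: "'a::monoid_mult"
  assumes "x * y = y * x" and "y * z = 1" and "z * y = 1"
  shows "x * z = z * x"
proof -
  have "x * z = z * (y * x) * z" using assms(3) by (simp add: mult.assoc[symmetric])
  also have "\<dots> = z * x * (y * z)" by (metis assms(1) mult.assoc)
  finally show ?thesis using assms(2) by simp
qed

locale hecke_relations =
  fixes m :: enat and n :: nat and cs :: "complex \<Rightarrow> 'a::ring_1"
    and q qi tau taui :: 'a and v vi sigma sigmai :: "nat \<Rightarrow> 'a"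
  assumes rels: "hecke_rels m n cs q qi v vi tau taui sigma sigmai"
begin

abbreviation "Sc \<equiv> scalars m cs q qi v vi"
abbreviation "W \<equiv> Wtilde m n cs q qi v vi tau taui sigma"

lemma scalars_commute: "a \<in> Sc \<Longrightarrow> a * x = x * a"
proof (induction arbitrary: x rule: scalars.induct)
  case (sc_add a b)
  then show ?case by (simp add: algebra_simps)
next
  case (sc_mult a b)
  then show ?case by (metis mult.assoc)
qed (use rels in \<open>auto simp: hecke_rels_def\<close>)

lemma cs_minus_one: "cs (-1) = -1"
proof -
  have "cs 0 = cs 0 + cs 0" "cs (-1) + cs 1 = cs 0" "cs 1 = 1"
    using rels unfolding hecke_rels_def by (metis add_0, metis add.left_inverse, blast)
  then show ?thesis by (simp add: eq_neg_iff_add_eq_0)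
qed

lemma scalars_diff:
  assumes "a \<in> Sc" and "b \<in> Sc"
  shows "a - b \<in> Sc"
proof -
  have "a + cs (-1) * b \<in> Sc" using assms by (intro scalars.intros)
  then show ?thesis by (simp add: cs_minus_one)
qed

lemma sigmai_eq:
  assumes "1 \<le> i" and "i < n"
  shows "sigmai i = sigma i + (qi - q)"
proof -
  have inv: "sigma i * sigmai i = 1" "sigmai i * sigma i = 1"
    and quad: "sigma i * sigma i = (q - qi) * sigma i + 1"
    using rels assms unfolding hecke_rels_def by auto
  have central: "(q - qi) * x = x * (q - qi)" for x
    by (intro scalars_commute scalars_diff scalars.intros)
  have "sigma i = sigmai i * (sigma i * sigma i)" using inv by (simp add: mult.assoc[symmetric])
  also have "\<dots> = sigmai i * sigma i * (q - qi) + sigmai i"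
    unfolding quad central by (simp add: algebra_simps)
  finally show ?thesis using inv by (simp add: algebra_simps)
qed

definition spow_offset :: "int \<Rightarrow> 'a" where
  "spow_offset d = (if d = 1 then 0 else qi - q)"

lemma spow_offset_scalar: "spow_offset d \<in> Sc"
proof -
  have "q - q \<in> Sc" "qi - q \<in> Sc" by (intro scalars_diff scalars.intros)+
  then show ?thesis by (simp add: spow_offset_def)
qed

lemma spow_eq: "1 \<le> i \<Longrightarrow> i < n \<Longrightarrow> spow sigma sigmai d i = sigma i + spow_offset d"
  by (simp add: spow_def spow_offset_def sigmai_eq)

lemma spow_Wtilde: "1 \<le> i \<Longrightarrow> i + 2 \<le> n \<Longrightarrow> spow sigma sigmai d i \<in> W"
  by (simp add: spow_eq Wtilde.W_add Wtilde.W_sc Wtilde.W_sigma spow_offset_scalar)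

lemma spow_commute:
  "1 \<le> i \<Longrightarrow> i < n \<Longrightarrow> sigma i * y = y * sigma i \<Longrightarrow> spow sigma sigmai d i * y = y * spow sigma sigmai d i"
  by (simp add: spow_eq distrib_left distrib_right scalars_commute[OF spow_offset_scalar])

lemma spow_commute_far:
  assumes "1 \<le> i" and "i + 1 < J" and "J < n"
  shows "spow sigma sigmai d i * spow sigma sigmai d' J = spow sigma sigmai d' J * spow sigma sigmai d i"
proof -
  have "sigma i * sigma J = sigma J * sigma i"
    using rels assms unfolding hecke_rels_def by auto
  then have "sigma i * spow sigma sigmai d' J = spow sigma sigmai d' J * sigma i"
    using spow_commute[of J "sigma i" d'] assms by simp
  then show ?thesis using spow_commute assms by simp
qed

lemma spow_commute_desc_prod:
  assumes "k + 2 \<le> J" and "J < n"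
  shows "spow sigma sigmai d' J * desc_prod (spow sigma sigmai d) k
       = desc_prod (spow sigma sigmai d) k * spow sigma sigmai d' J"
  unfolding desc_prod_def using assms by (intro commute_prod_list) (auto intro: spow_commute_far[symmetric])

lemma sigma_commute_tpow:
  assumes "1 < i" and "i < n"
  shows "sigma i * tpow tau taui a = tpow tau taui a * sigma i"
proof -
  have tau: "tau * sigma i = sigma i * tau" and inv: "tau * taui = 1" "taui * tau = 1"
    using rels assms unfolding hecke_rels_def by auto
  have taui: "taui * sigma i = sigma i * taui"
    using commute_with_inverse[OF tau[symmetric] inv] by simp
  show ?thesis
    unfolding tpow_def
    using power_commuting_commutes[OF tau] power_commuting_commutes[OF taui] by simp
qed

lemma upt_split_pair:
  assumes "2 \<le> J" and "J < n"
  shows "[1..<n] = [1..<J-1] @ [J-1, J] @ [Suc J..<n]"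
proof -
  have "[1..<n] = [1..<J-1] @ [J-1..<n]"
    using assms upt_add_eq_append[of 1 "J-1" "n - (J-1)"] by simp
  also have "[J-1..<n] = [J-1, J] @ [Suc J..<n]"
    using assms by (simp add: upt_conv_Cons)
  finally show ?thesis .
qed

lemma sigma_asc_prod:
  assumes "2 \<le> J" and "J < n"
  shows "sigma J * asc_prod sigma n = asc_prod sigma n * sigma (J - 1)"
proof -
  define P1 where "P1 = prod_list (map sigma [1..<J-1])"
  define P2 where "P2 = prod_list (map sigma [Suc J..<n])"
  have asc: "asc_prod sigma n = P1 * (sigma (J-1) * (sigma J * P2))"
    unfolding asc_prod_def P1_def P2_def upt_split_pair[OF assms] by (simp add: mult.assoc)
  have far: "sigma i * sigma k = sigma k * sigma i" if "1 \<le> i" "i + 1 < k" "k < n" for i k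
    using rels that unfolding hecke_rels_def by auto
  have braid: "sigma i * sigma (i+1) * sigma i = sigma (i+1) * sigma i * sigma (i+1)"
    if "1 \<le> i" "i + 1 < n" for i
    using rels that unfolding hecke_rels_def by blast
  have J: "J - 1 + 1 = J" "1 \<le> J - 1" "J - 1 + 1 < n" using assms by auto
  have P1: "sigma J * P1 = P1 * sigma J"
    unfolding P1_def using assms by (intro commute_prod_list) (auto intro!: far[symmetric])
  have P2: "sigma (J-1) * P2 = P2 * sigma (J-1)"
    unfolding P2_def using assms by (intro commute_prod_list) (auto intro: far)
  have "sigma J * asc_prod sigma n = P1 * (sigma J * sigma (J-1) * sigma J) * P2"
    unfolding asc by (simp add: mult.assoc[symmetric] P1)
  also have "\<dots> = P1 * (sigma (J-1) * sigma J * sigma (J-1)) * P2"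
    using braid[OF J(2,3)] unfolding J(1) by simp
  also have "\<dots> = asc_prod sigma n * sigma (J-1)"
    unfolding asc using P2 by (simp add: mult.assoc)
  finally show ?thesis .
qed

lemma spow_tpow_asc_prod:
  assumes "2 \<le> J" and "J < n"
  shows "spow sigma sigmai d J * (tpow tau taui a * asc_prod sigma n)
       = tpow tau taui a * asc_prod sigma n * spow sigma sigmai d (J - 1)"
proof -
  let ?X = "tpow tau taui a * asc_prod sigma n"
  have "sigma J * ?X = tpow tau taui a * (sigma J * asc_prod sigma n)"
    using sigma_commute_tpow[of J a] assms by (simp add: mult.assoc[symmetric])
  also have "\<dots> = ?X * sigma (J - 1)"
    using sigma_asc_prod[OF assms] by (simp add: mult.assoc)
  finally have "sigma J * ?X = ?X * sigma (J - 1)" .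
  then show ?thesis
    using assms by (simp add: spow_eq distrib_left distrib_right scalars_commute[OF spow_offset_scalar])
qed

definition monomial :: "int \<Rightarrow> int \<Rightarrow> nat \<Rightarrow> 'a \<Rightarrow> 'a" where
  "monomial d a k w = desc_prod (spow sigma sigmai d) k * tpow tau taui a * asc_prod sigma n * w"

lemma monomial_0: "monomial d a 0 w = monomial d' a 0 w"
  by (simp add: monomial_def desc_prod_def)

lemma monomial_Suc: "monomial d a (Suc k) w = spow sigma sigmai d (Suc k) * monomial d a k w"
  by (simp add: monomial_def desc_prod_def mult.assoc)

lemma spow_monomial:
  assumes "k + 2 \<le> J" and "J < n"
  shows "spow sigma sigmai d' J * monomial d a k w = monomial d a k (spow sigma sigmai d' (J - 1) * w)"
proof -
  let ?S = "spow sigma sigmai d'" and ?D = "desc_prod (spow sigma sigmai d) k"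
    and ?X = "tpow tau taui a * asc_prod sigma n"
  have "?S J * monomial d a k w = ?S J * ?D * ?X * w"
    unfolding monomial_def by (simp add: mult.assoc)
  also have "\<dots> = ?D * (?S J * ?X) * w"
    unfolding spow_commute_desc_prod[OF assms] by (simp add: mult.assoc)
  also have "\<dots> = ?D * (?X * ?S (J - 1)) * w"
    using assms by (simp add: spow_tpow_asc_prod)
  also have "\<dots> = monomial d a k (?S (J - 1) * w)"
    unfolding monomial_def by (simp add: mult.assoc)
  finally show ?thesis .
qed


definition lower_combinations :: "int \<Rightarrow> int \<Rightarrow> nat \<Rightarrow> 'a set" where
  "lower_combinations d a j =
     {\<Sum>(c, k, w) \<leftarrow> ts. c * monomial d a k w | ts. \<forall>(c, k, w) \<in> set ts. c \<in> Sc \<and> k < j \<and> w \<in> W}"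

lemma lower_combinations_add:
  assumes "x \<in> lower_combinations d a j" and "y \<in> lower_combinations d a j"
  shows "x + y \<in> lower_combinations d a j"
proof -
  obtain ts us where
    "\<forall>(c, k, w) \<in> set ts. c \<in> Sc \<and> k < j \<and> w \<in> W" "x = (\<Sum>(c, k, w) \<leftarrow> ts. c * monomial d a k w)"
    "\<forall>(c, k, w) \<in> set us. c \<in> Sc \<and> k < j \<and> w \<in> W" "y = (\<Sum>(c, k, w) \<leftarrow> us. c * monomial d a k w)"
    using assms unfolding lower_combinations_def by blast
  then show ?thesis
    unfolding lower_combinations_def by (intro CollectI exI[of _ "ts @ us"]) auto
qed

lemma lower_combinations_term:
  "c \<in> Sc \<Longrightarrow> k < j \<Longrightarrow> w \<in> W \<Longrightarrow> c * monomial d a k w \<in> lower_combinations d a j"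
  unfolding lower_combinations_def by (intro CollectI exI[of _ "[(c, k, w)]"]) simp

lemma spow_lower_combinations:
  assumes "x \<in> lower_combinations d a j" and "Suc j < n"
  shows "spow sigma sigmai d' (Suc j) * x \<in> lower_combinations d a (Suc j)"
proof -
  obtain ts where ts: "\<forall>(c, k, w) \<in> set ts. c \<in> Sc \<and> k < j \<and> w \<in> W"
    and x: "x = (\<Sum>(c, k, w) \<leftarrow> ts. c * monomial d a k w)"
    using assms(1) unfolding lower_combinations_def by blast
  define us where "us = map (\<lambda>(c, k, w). (c, k, spow sigma sigmai d' j * w)) ts"
  have spow_term: "spow sigma sigmai d' (Suc j) * (c * monomial d a k w)
             = c * monomial d a k (spow sigma sigmai d' j * w)" if "(c, k, w) \<in> set ts" for c k w
  proof -
    have "c \<in> Sc" "k + 2 \<le> Suc j" using ts that by auto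
    then have "spow sigma sigmai d' (Suc j) * (c * monomial d a k w)
             = c * (spow sigma sigmai d' (Suc j) * monomial d a k w)"
      by (metis mult.assoc scalars_commute)
    then show ?thesis
      using spow_monomial[of k "Suc j" d' d a w] assms(2) \<open>k + 2 \<le> Suc j\<close> by simp
  qed
  have "spow sigma sigmai d' (Suc j) * x
      = (\<Sum>t \<leftarrow> ts. spow sigma sigmai d' (Suc j) * (case t of (c, k, w) \<Rightarrow> c * monomial d a k w))"
    unfolding x by (simp add: sum_list_const_mult)
  also have "\<dots> = (\<Sum>(c, k, w) \<leftarrow> us. c * monomial d a k w)"
    unfolding us_def map_map by (intro arg_cong[where f = sum_list] map_cong) (auto simp: spow_term)
  finally have sum: "spow sigma sigmai d' (Suc j) * x = (\<Sum>(c, k, w) \<leftarrow> us. c * monomial d a k w)" .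
  have "spow sigma sigmai d' j * w \<in> W" if "(c, k, w) \<in> set ts" for c k w
  proof -
    have "1 \<le> j" "j + 2 \<le> n" "w \<in> W" using ts that assms(2) by auto
    then show ?thesis by (intro Wtilde.W_mult spow_Wtilde)
  qed
  then have "\<forall>(c, k, w) \<in> set us. c \<in> Sc \<and> k < Suc j \<and> w \<in> W"
    using ts unfolding us_def by auto
  with sum show ?thesis
    unfolding lower_combinations_def by blast
qed

lemma lower_combinations_indexed:
  assumes "x \<in> lower_combinations d a j"
  shows "\<exists>(K::nat) c k wk. (\<forall>l<K. c l \<in> Sc \<and> k l < j \<and> wk l \<in> W)
           \<and> x = (\<Sum>l<K. c l * monomial d a (k l) (wk l))"
proof -
  obtain ts where ts: "\<forall>(c, k, w) \<in> set ts. c \<in> Sc \<and> k < j \<and> w \<in> W"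
    and x: "x = (\<Sum>(c, k, w) \<leftarrow> ts. c * monomial d a k w)"
    using assms unfolding lower_combinations_def by blast
  let ?c = "\<lambda>l. fst (ts ! l)" and ?k = "\<lambda>l. fst (snd (ts ! l))" and ?w = "\<lambda>l. snd (snd (ts ! l))"
  have "x = (\<Sum>l<length ts. ?c l * monomial d a (?k l) (?w l))"
    unfolding x sum_list_sum_nth by (simp add: atLeast0LessThan case_prod_beta)
  moreover have "\<forall>l<length ts. ?c l \<in> Sc \<and> ?k l < j \<and> ?w l \<in> W"
    using ts nth_mem by fastforce
  ultimately show ?thesis
    by (intro exI[of _ "length ts"] exI[of _ ?c] exI[of _ ?k] exI[of _ ?w]) simp
qed

lemma monomial_sign_change:
  assumes "j < n" and "w \<in> W"
  shows "\<exists>y \<in> lower_combinations (- e) a j. monomial e a j w = monomial (- e) a j w + y"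
  using assms(1)
proof (induction j)
  case 0
  have "0 \<in> lower_combinations (- e) a 0"
    unfolding lower_combinations_def by (intro CollectI exI[of _ "[]"]) simp
  then show ?case using monomial_0 by force
next
  case (Suc j)
  let ?Sp = "spow sigma sigmai e (Suc j)" and ?Sm = "spow sigma sigmai (- e) (Suc j)"
    and ?M = "monomial (- e) a j w"
  obtain y where y: "y \<in> lower_combinations (- e) a j" "monomial e a j w = ?M + y"
    using Suc by auto
  define c where "c = spow_offset e - spow_offset (- e)"
  have c: "c \<in> Sc" unfolding c_def by (intro scalars_diff spow_offset_scalar)
  have "?Sp = ?Sm + c" using Suc.prems by (simp add: spow_eq c_def)
  then have "monomial e a (Suc j) w = monomial (- e) a (Suc j) w + (c * ?M + ?Sp * y)"
    by (simp add: monomial_Suc y(2) algebra_simps)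
  moreover have "c * ?M + ?Sp * y \<in> lower_combinations (- e) a (Suc j)"
    using Suc.prems by (intro lower_combinations_add lower_combinations_term
        spow_lower_combinations c assms(2) y(1)) simp_all
  ultimately show ?case by blast
qed

end

theorem mainTheorem7:
  fixes m :: enat and n j :: nat and e alpha :: int
    and cs :: "complex \<Rightarrow> 'a::ring_1" and q qi tau taui w :: 'a
    and v vi sigma sigmai :: "nat \<Rightarrow> 'a"
  assumes "0 < m" and "1 \<le> n"
    and "hecke_rels m n cs q qi v vi tau taui sigma sigmai"
    and "e = 1 \<or> e = -1"
    and "j < n" and "alpha \<in> Eset m"
    and "w \<in> Wtilde m n cs q qi v vi tau taui sigma"
  shows "\<exists>(K::nat) (a::nat \<Rightarrow> 'a) (k::nat \<Rightarrow> nat) (wk::nat \<Rightarrow> 'a).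
           (\<forall>l<K. a l \<in> scalars m cs q qi v vi \<and> k l < j
                   \<and> wk l \<in> Wtilde m n cs q qi v vi tau taui sigma) \<and>
           desc_prod (spow sigma sigmai e) j * tpow tau taui alpha * asc_prod sigma n * w
           = desc_prod (spow sigma sigmai (- e)) j * tpow tau taui alpha * asc_prod sigma n * w
             + (\<Sum>l<K. a l * (desc_prod (spow sigma sigmai (- e)) (k l) * tpow tau taui alpha
                              * asc_prod sigma n * wk l))"
proof -
  interpret hecke_relations m n cs q qi tau taui v vi sigma sigmai
    using assms(3) by unfold_locales
  obtain y where "y \<in> lower_combinations (- e) alpha j"
    and "monomial e alpha j w = monomial (- e) alpha j w + y"
    using monomial_sign_change[OF assms(5,7)] by blast
  then show ?thesis
    using lower_combinations_indexed unfolding monomial_def by blast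
qed

end
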